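(* Let $X_1,\dots,X_n$ be mutually independent random variables, $X_i$ taking values in a set $D_i$ according to a given distribution, with product distribution $\mu$, and let $A_1,\dots,A_m$ be events, $A_i$ determined by the variables indexed by $\mathrm{vbl}(A_i)\subseteq[n]$. Call distinct $i,j$ dependent if $\mathrm{vbl}(A_i)\cap\mathrm{vbl}(A_j)\ne\emptyset$, and assume that for every dependent pair $i,j$, $\Pr_\mu(A_i\wedge A_j)=0$. Consider the algorithm: draw all variables independently from their distributions; while at least one $A_i$ occurs, let $I$ be the set of indices of occurring events and independently resample all variables in $\bigcup_{i\in I}\mathrm{vbl}(A_i)$; when no $A_i$ occurs, output the current assignment. Then, when the algorithm halts, its output is distributed as $\mu$ conditioned on $\bigwedge_{i=1}^m\overline{A_i}$. *)

theory Defs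
  imports "HOL-Probability.Probability"
begin

text \<open>Product distribution of n independent variables X_0..X_{n-1}; variable k has law p k.
  Assignments are functions nat => 'a, fixed to undefined outside the index range.\<close>
definition prod_dist :: "nat \<Rightarrow> (nat \<Rightarrow> 'a pmf) \<Rightarrow> (nat \<Rightarrow> 'a) pmf" where
  "prod_dist n p = Pi_pmf {..<n} undefined p"

definition determined_by :: "(nat \<Rightarrow> 'a) set \<Rightarrow> nat set \<Rightarrow> bool" where
  "determined_by E V \<longleftrightarrow> (\<forall>\<sigma> \<tau>. (\<forall>k\<in>V. \<sigma> k = \<tau> k) \<longrightarrow> (\<sigma> \<in> E \<longleftrightarrow> \<tau> \<in> E))"

definition occurring :: "nat \<Rightarrow> (nat \<Rightarrow> (nat \<Rightarrow> 'a) set) \<Rightarrow> (nat \<Rightarrow> 'a) \<Rightarrow> nat set" where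
  "occurring m A s = {i. i < m \<and> s \<in> A i}"

definition good_set :: "nat \<Rightarrow> (nat \<Rightarrow> (nat \<Rightarrow> 'a) set) \<Rightarrow> (nat \<Rightarrow> 'a) set" where
  "good_set m A = {s. \<forall>i<m. s \<notin> A i}"

definition prs_step :: "nat \<Rightarrow> (nat \<Rightarrow> 'a pmf) \<Rightarrow> nat \<Rightarrow> (nat \<Rightarrow> (nat \<Rightarrow> 'a) set)
    \<Rightarrow> (nat \<Rightarrow> nat set) \<Rightarrow> (nat \<Rightarrow> 'a) \<Rightarrow> (nat \<Rightarrow> 'a) pmf" where
  "prs_step n p m A vbl s =
     (if occurring m A s = {} then return_pmf s
      else (let S = (\<Union>i\<in>occurring m A s. vbl i) in
            map_pmf (\<lambda>\<tau> k. if k \<in> S then \<tau> k else s k) (prod_dist n p)))"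

text \<open>Distribution of the state after t rounds (initially all variables drawn from mu).
  The algorithm has halted by round t iff this state lies in good_set m A.\<close>
primrec prs_state :: "nat \<Rightarrow> (nat \<Rightarrow> 'a pmf) \<Rightarrow> nat \<Rightarrow> (nat \<Rightarrow> (nat \<Rightarrow> 'a) set)
    \<Rightarrow> (nat \<Rightarrow> nat set) \<Rightarrow> nat \<Rightarrow> (nat \<Rightarrow> 'a) pmf" where
  "prs_state n p m A vbl 0 = prod_dist n p"
| "prs_state n p m A vbl (Suc t) = bind_pmf (prs_state n p m A vbl t) (prs_step n p m A vbl)"

end

theory Submission
  imports Defs
begin

(*
  Resampling the variables in a set S from their product law \<mu> is a reversible kernel:
  \<mu>(\<sigma>) P_S(\<sigma>, \<sigma>') = \<mu>(\<sigma>') P_S(\<sigma>', \<sigma>), since both sides are the law of a pair of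
  configurations that share an independent copy off S and have independent copies on S.
  By induction on the number of rounds, the state has density f(O(\<sigma>)) with respect to \<mu>,
  where O(\<sigma>) is the set of events occurring at \<sigma>. Indeed, by reversibility the mass arriving
  at \<sigma>' is \<mu>(\<sigma>') times a sum over I of f(I) times the probability that resampling \<sigma>' on
  vbl(I) makes exactly the events in I occur, and by extremality this probability depends on
  \<sigma>' only through O(\<sigma>'): every event of I must occur afterwards, an event of O(\<sigma>') disjoint
  from vbl(I) keeps occurring, and one meeting vbl(I) cannot occur together with the dependent
  events of I. On the good set the density is the constant f({}), so conditioning on it yields
  \<mu> conditioned on the good set.
*)

lemma override_on_override_on:
  "override_on (override_on f g A) h A = override_on f h A"
  by (simp add: override_on_def fun_eq_iff)

lemma Pi_pmf_eq_map_override_on: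
  assumes "finite I"
  shows "Pi_pmf I d p
           = map_pmf (\<lambda>(\<sigma>, \<tau>). override_on \<sigma> \<tau> S) (pair_pmf (Pi_pmf I d p) (Pi_pmf I d p))"
proof -
  let ?P = "Pi_pmf I d p"
  let ?restr = "\<lambda>J f x. if x \<in> J then f x else d"
  have "?P = Pi_pmf ((I - S) \<union> (I \<inter> S)) d p"
    by (simp add: Un_Diff_Int)
  also have "\<dots> = map_pmf (\<lambda>(f, g) x. if x \<in> I - S then f x else g x)
               (pair_pmf (Pi_pmf (I - S) d p) (Pi_pmf (I \<inter> S) d p))"
    using assms by (intro Pi_pmf_union) auto
  also have "pair_pmf (Pi_pmf (I - S) d p) (Pi_pmf (I \<inter> S) d p)
      = map_pmf (\<lambda>(f, g). (?restr (I - S) f, ?restr (I \<inter> S) g)) (pair_pmf ?P ?P)"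
    using assms
    by (simp only: map_pair Pi_pmf_subset[of I "I - S"] Pi_pmf_subset[of I "I \<inter> S"]
        Diff_subset Int_lower1)
  also have "map_pmf (\<lambda>(f, g) x. if x \<in> I - S then f x else g x) \<dots>
      = map_pmf (\<lambda>(\<sigma>, \<tau>). override_on \<sigma> \<tau> S) (pair_pmf ?P ?P)"
    unfolding map_pmf_comp using set_Pi_pmf_subset[OF assms, of d p]
    by (intro map_pmf_cong refl) (auto simp: fun_eq_iff override_on_def subset_iff; metis)
  finally show ?thesis .
qed

definition resample :: "nat \<Rightarrow> (nat \<Rightarrow> 'a pmf) \<Rightarrow> nat set \<Rightarrow> (nat \<Rightarrow> 'a) \<Rightarrow> (nat \<Rightarrow> 'a) pmf" where
  "resample n p S \<sigma> = map_pmf (\<lambda>\<tau>. override_on \<sigma> \<tau> S) (prod_dist n p)"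

lemma nn_integral_resample_reversible:
  "(\<integral>\<^sup>+\<sigma>. g \<sigma> * (\<integral>\<^sup>+\<tau>. h \<tau> \<partial>resample n p S \<sigma>) \<partial>prod_dist n p)
     = (\<integral>\<^sup>+\<sigma>. h \<sigma> * (\<integral>\<^sup>+\<tau>. g \<tau> \<partial>resample n p S \<sigma>) \<partial>prod_dist n p)"
proof -
  let ?\<mu> = "prod_dist n p"
  have "(\<integral>\<^sup>+\<sigma>. g \<sigma> * (\<integral>\<^sup>+\<tau>. h \<tau> \<partial>resample n p S \<sigma>) \<partial>?\<mu>)
      = (\<integral>\<^sup>+a. (\<integral>\<^sup>+b. g (override_on a b S) \<partial>?\<mu>) * (\<integral>\<^sup>+c. h (override_on a c S) \<partial>?\<mu>) \<partial>?\<mu>)"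
    for g h :: "(nat \<Rightarrow> 'a) \<Rightarrow> ennreal"
  proof -
    have "(\<integral>\<^sup>+\<sigma>. g \<sigma> * (\<integral>\<^sup>+\<tau>. h \<tau> \<partial>resample n p S \<sigma>) \<partial>?\<mu>)
        = (\<integral>\<^sup>+\<sigma>. g \<sigma> * (\<integral>\<^sup>+\<tau>. h (override_on \<sigma> \<tau> S) \<partial>?\<mu>)
             \<partial>map_pmf (\<lambda>(\<sigma>, \<tau>). override_on \<sigma> \<tau> S) (pair_pmf ?\<mu> ?\<mu>))"
      unfolding resample_def prod_dist_def
      by (simp flip: Pi_pmf_eq_map_override_on)
    also have "\<dots> = (\<integral>\<^sup>+a. \<integral>\<^sup>+b. g (override_on a b S) * (\<integral>\<^sup>+c. h (override_on a c S) \<partial>?\<mu>) \<partial>?\<mu> \<partial>?\<mu>)"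
      by (simp add: nn_integral_pair_pmf' override_on_override_on)
    also have "\<dots> = (\<integral>\<^sup>+a. (\<integral>\<^sup>+b. g (override_on a b S) \<partial>?\<mu>) * (\<integral>\<^sup>+c. h (override_on a c S) \<partial>?\<mu>) \<partial>?\<mu>)"
      by (simp add: nn_integral_multc)
    finally show ?thesis .
  qed
  then show ?thesis
    by (simp add: mult.commute)
qed

lemma pmf_resample_reversible:
  "pmf (prod_dist n p) \<sigma> * pmf (resample n p S \<sigma>) \<sigma>'
     = pmf (prod_dist n p) \<sigma>' * pmf (resample n p S \<sigma>') \<sigma>"
proof -
  have "ennreal (pmf (prod_dist n p) x * pmf (resample n p S x) y)
      = (\<integral>\<^sup>+\<sigma>. indicator {x} \<sigma> * (\<integral>\<^sup>+\<tau>. indicator {y} \<tau> \<partial>resample n p S \<sigma>) \<partial>prod_dist n p)"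
    for x y
  proof -
    have "ennreal (pmf (prod_dist n p) x * pmf (resample n p S x) y)
        = ennreal (pmf (resample n p S x) y) * ennreal (pmf (prod_dist n p) x)"
      by (simp add: ennreal_mult' mult.commute)
    also have "\<dots> = (\<integral>\<^sup>+\<sigma>. ennreal (pmf (resample n p S \<sigma>) y) * indicator {x} \<sigma> \<partial>prod_dist n p)"
      by (simp add: emeasure_pmf_single)
    also have "\<dots> = (\<integral>\<^sup>+\<sigma>. indicator {x} \<sigma> * (\<integral>\<^sup>+\<tau>. indicator {y} \<tau> \<partial>resample n p S \<sigma>) \<partial>prod_dist n p)"
      by (simp add: emeasure_pmf_single mult.commute)
    finally show ?thesis .
  qed
  note expand = this
  have "ennreal (pmf (prod_dist n p) \<sigma> * pmf (resample n p S \<sigma>) \<sigma>')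
      = ennreal (pmf (prod_dist n p) \<sigma>' * pmf (resample n p S \<sigma>') \<sigma>)"
    unfolding expand by (rule nn_integral_resample_reversible)
  then show ?thesis
    by simp
qed

lemma cond_pmf_eq_if_proportional:
  assumes proportional: "\<And>\<sigma>. \<sigma> \<in> G \<Longrightarrow> ennreal (pmf D \<sigma>) = c * ennreal (pmf \<mu> \<sigma>)"
    and hit: "set_pmf D \<inter> G \<noteq> {}"
  shows "set_pmf \<mu> \<inter> G \<noteq> {} \<and> cond_pmf D G = cond_pmf \<mu> G"
proof -
  from hit obtain \<sigma>\<^sub>0 where \<sigma>\<^sub>0: "\<sigma>\<^sub>0 \<in> set_pmf D" "\<sigma>\<^sub>0 \<in> G"
    by blast
  then have "c * ennreal (pmf \<mu> \<sigma>\<^sub>0) \<noteq> 0" "c * ennreal (pmf \<mu> \<sigma>\<^sub>0) \<noteq> \<top>"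
    using proportional[of \<sigma>\<^sub>0] by (auto simp: set_pmf_iff)
  then have "c \<noteq> \<top>" and \<mu>\<sigma>\<^sub>0: "pmf \<mu> \<sigma>\<^sub>0 > 0"
    by (auto simp: ennreal_mult_eq_top_iff less_le)
  define r where "r = enn2real c"
  have pmf_D: "pmf D \<sigma> = r * pmf \<mu> \<sigma>" if "\<sigma> \<in> G" for \<sigma>
    using proportional[OF that] \<open>c \<noteq> \<top>\<close>
    by (cases c) (auto simp: r_def ennreal_mult[symmetric])
  have "r > 0"
    using pmf_positive[OF \<sigma>\<^sub>0(1)] pmf_D[OF \<sigma>\<^sub>0(2)] \<mu>\<sigma>\<^sub>0 by (simp add: zero_less_mult_iff)
  have "\<sigma>\<^sub>0 \<in> set_pmf \<mu>"
    using \<mu>\<sigma>\<^sub>0 by (simp add: set_pmf_iff)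
  with \<sigma>\<^sub>0(2) have \<mu>_hit: "set_pmf \<mu> \<inter> G \<noteq> {}"
    by blast
  have "measure_pmf.prob D G = r * measure_pmf.prob \<mu> G"
    by (simp add: measure_pmf_conv_infsetsum pmf_D infsetsum_cmult_right[OF pmf_abs_summable]
        cong: infsetsum_cong)
  then have "cond_pmf D G = cond_pmf \<mu> G"
    using \<open>r > 0\<close> by (intro pmf_eqI) (simp add: pmf_cond[OF hit] pmf_cond[OF \<mu>_hit] pmf_D)
  with \<mu>_hit show ?thesis
    by blast
qed

lemma prs_step_eq_resample:
  "prs_step n p m A vbl \<sigma> = resample n p (\<Union>i\<in>occurring m A \<sigma>. vbl i) \<sigma>"
  by (simp add: prs_step_def resample_def override_on_def map_pmf_const)

lemma override_on_in_set_prod_dist: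
  assumes "\<sigma> \<in> set_pmf (prod_dist n p)" "\<tau> \<in> set_pmf (prod_dist n p)"
  shows "override_on \<sigma> \<tau> S \<in> set_pmf (prod_dist n p)"
  using assms by (auto simp: prod_dist_def set_Pi_pmf PiE_dflt_def override_on_def)

lemma ennreal_pmf_bind_prs_step:
  assumes density: "\<And>\<sigma>. ennreal (pmf D \<sigma>) = f (occurring m A \<sigma>) * ennreal (pmf (prod_dist n p) \<sigma>)"
  shows "ennreal (pmf (bind_pmf D (prs_step n p m A vbl)) \<sigma>')
           = ennreal (pmf (prod_dist n p) \<sigma>')
             * (\<Sum>I\<in>Pow {..<m}. f I * emeasure (resample n p (\<Union>(vbl ` I)) \<sigma>') {\<sigma>. occurring m A \<sigma> = I})"
proof -
  let ?\<mu> = "prod_dist n p" and ?O = "occurring m A"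
  let ?K = "\<lambda>I. resample n p (\<Union>(vbl ` I))"
  have split_occurring: "f (?O \<sigma>) * g (?O \<sigma>) = (\<Sum>I\<in>Pow {..<m}. f I * (indicator {\<sigma>. ?O \<sigma> = I} \<sigma> * g I))"
    for \<sigma> and g :: "nat set \<Rightarrow> ennreal"
  proof -
    have "(\<Sum>I\<in>Pow {..<m}. f I * (indicator {\<sigma>. ?O \<sigma> = I} \<sigma> * g I))
        = (\<Sum>I\<in>Pow {..<m}. if ?O \<sigma> = I then f I * g I else 0)"
      by (intro sum.cong) (auto simp: indicator_def)
    also have "\<dots> = f (?O \<sigma>) * g (?O \<sigma>)"
      by (auto simp: occurring_def)
    finally show ?thesis ..
  qed
  have "ennreal (pmf (bind_pmf D (prs_step n p m A vbl)) \<sigma>')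
      = (\<integral>\<^sup>+\<sigma>. ennreal (pmf D \<sigma>) * ennreal (pmf (?K (?O \<sigma>) \<sigma>) \<sigma>') \<partial>count_space UNIV)"
    by (simp add: ennreal_pmf_bind nn_integral_measure_pmf prs_step_eq_resample)
  also have "\<dots> = (\<integral>\<^sup>+\<sigma>. f (?O \<sigma>) * ennreal (pmf ?\<mu> \<sigma> * pmf (?K (?O \<sigma>) \<sigma>) \<sigma>') \<partial>count_space UNIV)"
    by (simp add: density ennreal_mult' mult.assoc)
  also have "\<dots> = (\<integral>\<^sup>+\<sigma>. f (?O \<sigma>) * ennreal (pmf ?\<mu> \<sigma>' * pmf (?K (?O \<sigma>) \<sigma>') \<sigma>) \<partial>count_space UNIV)"
    by (simp only: pmf_resample_reversible)
  also have "\<dots> = (\<integral>\<^sup>+\<sigma>. ennreal (pmf ?\<mu> \<sigma>')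
      * (\<Sum>I\<in>Pow {..<m}. f I * (indicator {\<sigma>. ?O \<sigma> = I} \<sigma> * ennreal (pmf (?K I \<sigma>') \<sigma>))) \<partial>count_space UNIV)"
    by (simp add: split_occurring[symmetric] ennreal_mult' mult.left_commute)
  also have "\<dots> = ennreal (pmf ?\<mu> \<sigma>') * (\<Sum>I\<in>Pow {..<m}. f I
      * (\<integral>\<^sup>+\<sigma>. ennreal (pmf (?K I \<sigma>') \<sigma>) * indicator {\<sigma>. ?O \<sigma> = I} \<sigma> \<partial>count_space UNIV))"
    by (simp add: nn_integral_cmult nn_integral_sum mult.commute)
  also have "\<dots> = ennreal (pmf ?\<mu> \<sigma>') * (\<Sum>I\<in>Pow {..<m}. f I * emeasure (?K I \<sigma>') {\<sigma>. ?O \<sigma> = I})"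
    by (simp add: nn_integral_measure_pmf[symmetric])
  finally show ?thesis .
qed

locale extremal_events =
  fixes n m :: nat and p :: "nat \<Rightarrow> 'a pmf"
    and A :: "nat \<Rightarrow> (nat \<Rightarrow> 'a) set" and vbl :: "nat \<Rightarrow> nat set"
  assumes determined: "\<And>i. i < m \<Longrightarrow> determined_by (A i) (vbl i)"
    and extremal: "\<And>i j. i < m \<Longrightarrow> j < m \<Longrightarrow> i \<noteq> j \<Longrightarrow> vbl i \<inter> vbl j \<noteq> {} \<Longrightarrow>
                     measure_pmf.prob (prod_dist n p) (A i \<inter> A j) = 0"
begin

lemma dependent_events_exclusive:
  assumes "\<sigma> \<in> set_pmf (prod_dist n p)" "i < m" "j < m" "i \<noteq> j" "vbl i \<inter> vbl j \<noteq> {}"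
    and "\<sigma> \<in> A i"
  shows "\<sigma> \<notin> A j"
  using measure_pmf_posI[of \<sigma> "prod_dist n p" "A i \<inter> A j"] extremal[of i j] assms by auto

lemma occurring_override_on_eq_iff:
  assumes \<sigma>: "\<sigma> \<in> set_pmf (prod_dist n p)" and \<tau>: "\<tau> \<in> set_pmf (prod_dist n p)"
    and I: "I \<subseteq> {..<m}"
  defines "S \<equiv> \<Union>(vbl ` I)"
  shows "occurring m A (override_on \<sigma> \<tau> S) = I
           \<longleftrightarrow> (\<forall>i\<in>I. \<tau> \<in> A i) \<and> (\<forall>j\<in>occurring m A \<sigma> - I. vbl j \<inter> S \<noteq> {})"
proof -
  define \<rho> where "\<rho> = override_on \<sigma> \<tau> S"
  have \<rho>_support: "\<rho> \<in> set_pmf (prod_dist n p)"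
    unfolding \<rho>_def using \<sigma> \<tau> by (rule override_on_in_set_prod_dist)
  have new: "\<rho> \<in> A i \<longleftrightarrow> \<tau> \<in> A i" if "i \<in> I" for i
  proof -
    have "\<forall>k\<in>vbl i. \<rho> k = \<tau> k"
      using that unfolding \<rho>_def S_def by (auto simp: override_on_def)
    then show ?thesis
      using determined[of i] that I unfolding determined_by_def by blast
  qed
  have old: "\<rho> \<in> A j \<longleftrightarrow> \<sigma> \<in> A j" if "j < m" "vbl j \<inter> S = {}" for j
  proof -
    have "\<forall>k\<in>vbl j. \<rho> k = \<sigma> k"
      using that(2) unfolding \<rho>_def by (auto simp: override_on_def)
    then show ?thesis
      using determined[OF that(1)] unfolding determined_by_def by blast
  qed
  have blocked: "\<rho> \<notin> A j" if "j < m" "j \<notin> I" "vbl j \<inter> S \<noteq> {}" "\<forall>i\<in>I. \<rho> \<in> A i" for j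
  proof -
    from that(3) obtain i where "i \<in> I" "vbl i \<inter> vbl j \<noteq> {}"
      unfolding S_def by blast
    then show ?thesis
      using dependent_events_exclusive[OF \<rho>_support, of i j] that I by auto
  qed
  show ?thesis
    unfolding \<rho>_def[symmetric]
  proof
    assume occ: "occurring m A \<rho> = I"
    then have "\<forall>i\<in>I. \<tau> \<in> A i"
      using new by (auto simp: occurring_def)
    moreover have "vbl j \<inter> S \<noteq> {}" if "j \<in> occurring m A \<sigma> - I" for j
      using old[of j] that occ by (auto simp: occurring_def)
    ultimately show "(\<forall>i\<in>I. \<tau> \<in> A i) \<and> (\<forall>j\<in>occurring m A \<sigma> - I. vbl j \<inter> S \<noteq> {})"
      by blast
  next
    assume cond: "(\<forall>i\<in>I. \<tau> \<in> A i) \<and> (\<forall>j\<in>occurring m A \<sigma> - I. vbl j \<inter> S \<noteq> {})"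
    then have "\<forall>i\<in>I. \<rho> \<in> A i"
      using new by blast
    moreover have "j \<in> I" if "j < m" "\<rho> \<in> A j" for j
      using old[of j] blocked[of j] cond that \<open>\<forall>i\<in>I. \<rho> \<in> A i\<close>
      by (auto simp: occurring_def)
    ultimately show "occurring m A \<rho> = I"
      using I by (auto simp: occurring_def)
  qed
qed

lemma emeasure_resample_occurring:
  assumes \<sigma>: "\<sigma> \<in> set_pmf (prod_dist n p)" and I: "I \<subseteq> {..<m}"
  defines "S \<equiv> \<Union>(vbl ` I)"
  shows "emeasure (resample n p S \<sigma>) {\<sigma>'. occurring m A \<sigma>' = I}
           = (if \<forall>j\<in>occurring m A \<sigma> - I. vbl j \<inter> S \<noteq> {}
              then emeasure (prod_dist n p) {\<tau>. \<forall>i\<in>I. \<tau> \<in> A i} else 0)"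
proof -
  let ?\<mu> = "prod_dist n p"
  let ?E = "if \<forall>j\<in>occurring m A \<sigma> - I. vbl j \<inter> S \<noteq> {} then {\<tau>. \<forall>i\<in>I. \<tau> \<in> A i} else {}"
  have "emeasure (resample n p S \<sigma>) {\<sigma>'. occurring m A \<sigma>' = I}
      = emeasure ?\<mu> ({\<tau>. occurring m A (override_on \<sigma> \<tau> S) = I} \<inter> set_pmf ?\<mu>)"
    by (simp add: resample_def vimage_def emeasure_Int_set_pmf)
  also have "{\<tau>. occurring m A (override_on \<sigma> \<tau> S) = I} \<inter> set_pmf ?\<mu> = ?E \<inter> set_pmf ?\<mu>"
    using occurring_override_on_eq_iff[OF \<sigma> _ I] unfolding S_def by auto
  also have "emeasure ?\<mu> (?E \<inter> set_pmf ?\<mu>) = emeasure ?\<mu> ?E"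
    by (rule emeasure_Int_set_pmf)
  finally show ?thesis
    by simp
qed

lemma prs_state_density:
  "\<exists>f. \<forall>\<sigma>. ennreal (pmf (prs_state n p m A vbl t) \<sigma>)
           = f (occurring m A \<sigma>) * ennreal (pmf (prod_dist n p) \<sigma>)"
proof (induction t)
  case 0
  show ?case
    by (intro exI[of _ "\<lambda>_. 1"]) simp
next
  case (Suc t)
  then obtain f where f: "\<And>\<sigma>. ennreal (pmf (prs_state n p m A vbl t) \<sigma>)
                               = f (occurring m A \<sigma>) * ennreal (pmf (prod_dist n p) \<sigma>)"
    by blast
  define F where "F occ = (\<Sum>I\<in>Pow {..<m}. f I *
      (if \<forall>j\<in>occ - I. vbl j \<inter> \<Union>(vbl ` I) \<noteq> {}
       then emeasure (prod_dist n p) {\<tau>. \<forall>i\<in>I. \<tau> \<in> A i} else 0))" for occ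
  have "ennreal (pmf (prs_state n p m A vbl (Suc t)) \<sigma>)
          = F (occurring m A \<sigma>) * ennreal (pmf (prod_dist n p) \<sigma>)" for \<sigma>
  proof (cases "\<sigma> \<in> set_pmf (prod_dist n p)")
    case True
    have "(\<Sum>I\<in>Pow {..<m}. f I * emeasure (resample n p (\<Union>(vbl ` I)) \<sigma>) {\<sigma>'. occurring m A \<sigma>' = I})
        = F (occurring m A \<sigma>)"
      using True by (simp add: F_def emeasure_resample_occurring)
    then show ?thesis
      by (simp add: ennreal_pmf_bind_prs_step[OF f] mult.commute)
  next
    case False
    then show ?thesis
      by (simp add: ennreal_pmf_bind_prs_step[OF f] set_pmf_iff)
  qed
  then show ?case
    by blast
qed

end

theorem theorem8:
  fixes n m :: nat and p :: "nat \<Rightarrow> 'a pmf"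
    and A :: "nat \<Rightarrow> (nat \<Rightarrow> 'a) set" and vbl :: "nat \<Rightarrow> nat set"
  assumes vbl_sub: "\<And>i. i < m \<Longrightarrow> vbl i \<subseteq> {..<n}"
    and determined: "\<And>i. i < m \<Longrightarrow> determined_by (A i) (vbl i)"
    and extremal: "\<And>i j. i < m \<Longrightarrow> j < m \<Longrightarrow> i \<noteq> j \<Longrightarrow> vbl i \<inter> vbl j \<noteq> {} \<Longrightarrow>
                     measure_pmf.prob (prod_dist n p) (A i \<inter> A j) = 0"
    and halts: "set_pmf (prs_state n p m A vbl t) \<inter> good_set m A \<noteq> {}"
  shows "set_pmf (prod_dist n p) \<inter> good_set m A \<noteq> {}
         \<and> cond_pmf (prs_state n p m A vbl t) (good_set m A) = cond_pmf (prod_dist n p) (good_set m A)"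
proof -
  interpret extremal_events n m p A vbl
    using determined extremal by unfold_locales
  obtain f where f: "\<And>\<sigma>. ennreal (pmf (prs_state n p m A vbl t) \<sigma>)
                          = f (occurring m A \<sigma>) * ennreal (pmf (prod_dist n p) \<sigma>)"
    using prs_state_density by blast
  have "ennreal (pmf (prs_state n p m A vbl t) \<sigma>) = f {} * ennreal (pmf (prod_dist n p) \<sigma>)"
    if "\<sigma> \<in> good_set m A" for \<sigma>
  proof -
    have "occurring m A \<sigma> = {}"
      using that by (auto simp: good_set_def occurring_def)
    then show ?thesis
      using f[of \<sigma>] by simp
  qed
  then show ?thesis
    using halts by (rule cond_pmf_eq_if_proportional)
qed

end
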